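(* Protocol P4 (described in the context) perfectly constructs (i.e. $0$-constructs) the Remote State Preparation with Selective NOT resource RSP-SN from one use of the Remote Unitary resource RU, in the Abstract Cryptography framework.
   Context: Notation: $C(\rho)$ denotes $C\rho C^\dagger$; $Z$ is the Pauli phase flip. Abstract Cryptography (AC) framework (two parties: a Sender, always assumed honest, and a Receiver). A resource is a system with an interface for each party which receives (classical or quantum) inputs at its interfaces, applies a specified CPTP map, and returns outputs at interfaces; a filtered interface is accessible only to a dishonest party (and is set to a default value when the party is honest). A protocol $\pi=(\pi_S,\pi_R)$ consists of converters (sequences of CPTP maps describing honest parties' actions) plugged into the interfaces of the available resource $\mathcal R$, giving a new resource $\pi\mathcal R$. A distinguisher is an unbounded system interacting adaptively with all outer interfaces of a resource and outputting a bit. Two resources are $\epsilon$-indistinguishable, $\mathcal R_1\approx_\epsilon\mathcal R_2$, if for every distinguisher $\mathcal D$, $|\Pr[\mathcal D\mathcal R_1=1]-\Pr[\mathcal D\mathcal R_2=1]|\le\epsilon$. A protocol $\pi$ $\epsilon$-constructs $\mathcal S$ from $\mathcal R$ if (1) correctness: $\pi\mathcal R\approx_\epsilon\mathcal S$ (filtered interfaces at their honest defaults), and (2) security against a malicious Receiver: there exists a converter (simulator) $\sigma$ plugged into the Receiver's interface (including filtered interfaces) of $\mathcal S$ with $\pi_S\mathcal R\approx_\epsilon \mathcal S\sigma$. "Perfectly" means $\epsilon=0$. Resource RSP-SN: the Sender inputs the classical description of a single-qubit unitary $U$; the Receiver inputs a bit $b\in\{0,1\}$ on a filtered interface (set to $0$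 in the honest case); the resource sends a qubit in state $U|b\rangle$ to the Receiver. Resource RU: the Sender inputs the classical description of a single-qubit unitary $U$; the Receiver inputs a single qubit in state $\rho$; the resource outputs $U(\rho)$ to the Receiver. Protocol P4 (Sender input: single-qubit unitary $U$): the Sender samples $d\in\{0,1\}$ uniformly at random and inputs the unitary $UZ^d$ into RU; the honest Receiver inputs a qubit in state $|0\rangle$ and sets the qubit returned by RU as its output. *)

theory Defs
  imports Complex_Main "Jordan_Normal_Form.Matrix"
begin

definition adj :: "complex mat \<Rightarrow> complex mat" where
  "adj A = mat (dim_col A) (dim_row A) (\<lambda>(i,j). cnj (A $$ (j,i)))"

definition kron :: "complex mat \<Rightarrow> complex mat \<Rightarrow> complex mat" where
  "kron A B = mat (dim_row A * dim_row B) (dim_col A * dim_col B)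
     (\<lambda>(i,j). A $$ (i div dim_row B, j div dim_col B) * B $$ (i mod dim_row B, j mod dim_col B))"

definition trace :: "complex mat \<Rightarrow> complex" where
  "trace A = (\<Sum>i<dim_row A. A $$ (i,i))"

definition msum :: "nat \<Rightarrow> complex mat list \<Rightarrow> complex mat" where
  "msum d xs = foldr (+) xs (0\<^sub>m d d)"

definition psd :: "nat \<Rightarrow> complex mat \<Rightarrow> bool" where
  "psd d A \<longleftrightarrow> A \<in> carrier_mat d d \<and> (\<exists>B \<in> carrier_mat d d. A = B * adj B)"

definition effect :: "nat \<Rightarrow> complex mat \<Rightarrow> bool" where
  "effect d E \<longleftrightarrow> psd d E \<and> psd d (1\<^sub>m d - E)"

definition unitary2 :: "complex mat \<Rightarrow> bool" where
  "unitary2 U \<longleftrightarrow> U \<in> carrier_mat 2 2 \<and> U * adj U = 1\<^sub>m 2"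

definition conj_op :: "complex mat \<Rightarrow> complex mat \<Rightarrow> complex mat" where
  "conj_op C \<rho> = C * \<rho> * adj C"

text \<open>Action on the qubit of a (reference \<otimes> qubit) system; the reference
  system (held by the distinguisher) has dimension n and comes first.\<close>
definition lift :: "nat \<Rightarrow> complex mat \<Rightarrow> complex mat" where
  "lift n V = kron (1\<^sub>m n) V"

definition proj :: "nat \<Rightarrow> complex mat" where
  "proj b = mat 2 2 (\<lambda>(i,j). if i = b \<and> j = b then 1 else 0)"

definition pauliZ :: "complex mat" where
  "pauliZ = mat 2 2 (\<lambda>(i,j). if i = j then (if i = 0 then 1 else -1) else 0)"

text \<open>RSP-SN: Sender inputs U, Receiver (filtered) inputs bit b; output U|b>.\<close>
definition RSPSN :: "complex mat \<Rightarrow> nat \<Rightarrow> complex mat" where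
  "RSPSN U b = conj_op U (proj b)"

text \<open>RU: Sender inputs U, Receiver inputs a qubit (possibly entangled with
  an n-dimensional reference held by the environment); output U(rho).\<close>
definition RU :: "nat \<Rightarrow> complex mat \<Rightarrow> complex mat \<Rightarrow> complex mat" where
  "RU n U \<rho> = conj_op (lift n U) \<rho>"

text \<open>pi_S plugged into RU (Receiver interface of RU left open): the Sender
  samples d uniformly and inputs U Z^d into RU.\<close>
definition P4_real_mal :: "nat \<Rightarrow> complex mat \<Rightarrow> complex mat \<Rightarrow> complex mat" where
  "P4_real_mal n U \<rho> =
     msum (n*2) (map (\<lambda>d. (1/2 :: complex) \<cdot>\<^sub>m RU n (U * (pauliZ ^\<^sub>m d)) \<rho>) [0,1])"

text \<open>pi_S and pi_R plugged into RU (honest Receiver inputs |0>, outputs result);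
  sigma is the (correlated) internal memory of the distinguisher, dimension n.\<close>
definition P4_real_hon :: "nat \<Rightarrow> complex mat \<Rightarrow> complex mat \<Rightarrow> complex mat" where
  "P4_real_hon n U \<sigma> =
     msum (n*2) (map (\<lambda>d. (1/2 :: complex) \<cdot>\<^sub>m RU n (U * (pauliZ ^\<^sub>m d)) (kron \<sigma> (proj 0))) [0,1])"

text \<open>Ideal honest system: RSP-SN with filtered input at its default b = 0.\<close>
definition RSPSN_hon :: "nat \<Rightarrow> complex mat \<Rightarrow> complex mat \<Rightarrow> complex mat" where
  "RSPSN_hon n U \<sigma> = kron \<sigma> (RSPSN U 0)"

text \<open>A general simulator: receives the qubit, applies a quantum instrument with
  classical outcome b \<in> {0,1} and a quantum memory of dimension m
  (Kraus operators sim_K b, each m x 2), inputs b into the filtered interface of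
  RSP-SN, receives U|b>, and applies a channel (Kraus operators sim_L, each
  2 x (m*2)) to memory \<otimes> received qubit, outputting a qubit.\<close>
record simulator =
  sim_m :: nat
  sim_K :: "nat \<Rightarrow> complex mat list"
  sim_L :: "complex mat list"

definition valid_sim :: "simulator \<Rightarrow> bool" where
  "valid_sim s \<longleftrightarrow>
     (\<forall>b<2. \<forall>K \<in> set (sim_K s b). K \<in> carrier_mat (sim_m s) 2) \<and>
     msum 2 (map (\<lambda>K. adj K * K) (sim_K s 0 @ sim_K s 1)) = 1\<^sub>m 2 \<and>
     (\<forall>L \<in> set (sim_L s). L \<in> carrier_mat 2 (sim_m s * 2)) \<and>
     msum (sim_m s * 2) (map (\<lambda>L. adj L * L) (sim_L s)) = 1\<^sub>m (sim_m s * 2)"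

definition RSPSN_sim :: "simulator \<Rightarrow> nat \<Rightarrow> complex mat \<Rightarrow> complex mat \<Rightarrow> complex mat" where
  "RSPSN_sim s n U \<rho> =
     msum (n*2) (concat (map (\<lambda>b. concat (map (\<lambda>K. map (\<lambda>L.
        conj_op (lift n L) (kron (conj_op (lift n K) \<rho>) (RSPSN U b)))
        (sim_L s)) (sim_K s b))) [0,1]))"

text \<open>A system with outer interfaces: Sender (classical U) and Receiver
  (qubit in, qubit out).  A distinguisher with an n-dimensional reference
  system is given by a finite family of branches (U_i, rho_i, E_i): with
  (subnormalised) weight tr rho_i it inputs U_i at the Sender interface and the
  qubit part of rho_i (a state on reference \<otimes> qubit) at the Receiver interface;
  finally it measures its classical branch register and the returned qubit
  together with the reference, outputting 1 with effect E_i in branch i.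
  (Since all outputs arrive only after all inputs, this covers adaptive
  distinguishers.)\<close>
type_synonym system = "nat \<Rightarrow> complex mat \<Rightarrow> complex mat \<Rightarrow> complex mat"

definition distinguisher :: "nat \<Rightarrow> nat \<Rightarrow> (complex mat \<times> complex mat \<times> complex mat) list \<Rightarrow> bool" where
  "distinguisher n k D \<longleftrightarrow>
     (\<forall>(U,\<rho>,E) \<in> set D. unitary2 U \<and> psd k \<rho> \<and> effect (n*2) E) \<and>
     (\<Sum>(U,\<rho>,E) \<leftarrow> D. trace \<rho>) = 1"

definition prob_out1 :: "nat \<Rightarrow> (complex mat \<times> complex mat \<times> complex mat) list \<Rightarrow> system \<Rightarrow> real" where
  "prob_out1 n D R = (\<Sum>(U,\<rho>,E) \<leftarrow> D. Re (trace (E * R n U \<rho>)))"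

text \<open>eps-indistinguishability for systems with a Receiver qubit input
  (input states on reference \<otimes> qubit, dimension n*2).\<close>
definition indist_mal :: "real \<Rightarrow> system \<Rightarrow> system \<Rightarrow> bool" where
  "indist_mal \<epsilon> R1 R2 \<longleftrightarrow>
     (\<forall>n D. distinguisher n (n*2) D \<longrightarrow> \<bar>prob_out1 n D R1 - prob_out1 n D R2\<bar> \<le> \<epsilon>)"

text \<open>eps-indistinguishability for systems whose Receiver interface only
  outputs (the "input" is the distinguisher's own n-dimensional memory).\<close>
definition indist_hon :: "real \<Rightarrow> system \<Rightarrow> system \<Rightarrow> bool" where
  "indist_hon \<epsilon> R1 R2 \<longleftrightarrow>
     (\<forall>n D. distinguisher n n D \<longrightarrow> \<bar>prob_out1 n D R1 - prob_out1 n D R2\<bar> \<le> \<epsilon>)"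

definition P4_constructs_RSPSN :: "real \<Rightarrow> bool" where
  "P4_constructs_RSPSN \<epsilon> \<longleftrightarrow>
     indist_hon \<epsilon> P4_real_hon RSPSN_hon \<and>
     (\<exists>s. valid_sim s \<and> indist_mal \<epsilon> P4_real_mal (RSPSN_sim s))"

end

theory Submission
  imports Defs
begin

text \<open>In the honest case Z fixes \<open>|0\<rangle>\<close>, so both of the Sender's branches prepare
  \<open>U|0\<rangle>\<close>. Against a malicious Receiver, averaging over the secret \<open>Z\<^sup>d\<close>
  dephases the submitted qubit in the computational basis,
  \<open>(\<rho> + Z\<rho>Z)/2 = \<Sum>\<^sub>b \<langle>b|\<rho>|b\<rangle> |b\<rangle>\<langle>b|\<close>,
  so the real system coincides with RSP-SN behind a simulator that measures the
  qubit in the computational basis, uses the outcome as the filtered bit and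
  forwards \<open>U|b\<rangle>\<close>. Both identities are verified block by block: a matrix on
  reference \<open>\<otimes>\<close> qubit is determined by its 2 \<open>\<times>\<close> 2 blocks, and \<open>lift n V\<close> acts on
  every block by conjugation with V.\<close>

definition mat_block :: "nat \<Rightarrow> nat \<Rightarrow> nat \<Rightarrow> nat \<Rightarrow> 'a mat \<Rightarrow> 'a mat" where
  "mat_block p q a c M = mat p q (\<lambda>(s, t). M $$ (a * p + s, c * q + t))"

lemma mat_block_carrier_mat [simp]: "mat_block p q a c M \<in> carrier_mat p q"
  by (simp add: mat_block_def)

lemma dim_mat_block [simp]: "dim_row (mat_block p q a c M) = p" "dim_col (mat_block p q a c M) = q"
  by (simp_all add: mat_block_def)

lemma index_mat_block [simp]:
  "s < p \<Longrightarrow> t < q \<Longrightarrow> mat_block p q a c M $$ (s, t) = M $$ (a * p + s, c * q + t)"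
  by (simp add: mat_block_def)

lemma block_index_less:
  fixes a n s p :: nat
  assumes "a < n" "s < p"
  shows "a * p + s < n * p"
proof -
  have "a * p + s < Suc a * p" using assms(2) by simp
  also have "\<dots> \<le> n * p" using assms(1) by (intro mult_le_mono1) simp
  finally show ?thesis .
qed

lemma eq_mat_blockI:
  assumes A: "A \<in> carrier_mat (n * p) (m * q)" and B: "B \<in> carrier_mat (n * p) (m * q)"
    and blocks: "\<And>a c. a < n \<Longrightarrow> c < m \<Longrightarrow> mat_block p q a c A = mat_block p q a c B"
  shows "A = B"
proof (rule eq_matI)
  fix i j assume "i < dim_row B" "j < dim_col B"
  then have i: "i < n * p" and j: "j < m * q" using B by auto
  then have "p > 0" "q > 0" by (auto intro: gr0I)
  then have "i div p < n" "j div q < m" "i mod p < p" "j mod q < q"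
    using i j by (auto simp: less_mult_imp_div_less mult.commute[of n] mult.commute[of m])
  then have "mat_block p q (i div p) (j div q) A $$ (i mod p, j mod q)
    = mat_block p q (i div p) (j div q) B $$ (i mod p, j mod q)"
    using blocks by simp
  with \<open>i mod p < p\<close> \<open>j mod q < q\<close> show "A $$ (i, j) = B $$ (i, j)"
    by (simp add: mult.commute)
qed (use A B in auto)

lemma sum_if_div_eq:
  fixes f :: "nat \<Rightarrow> 'b :: comm_monoid_add"
  assumes "a < n"
  shows "(\<Sum>k<n * q. if k div q = a then f k else 0) = (\<Sum>y<q. f (a * q + y))"
proof -
  have "{k \<in> {..<n * q}. k div q = a} = (\<lambda>y. a * q + y) ` {..<q}"
  proof (intro equalityI subsetI)
    fix k assume "k \<in> {k \<in> {..<n * q}. k div q = a}"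
    then have k: "k < n * q" "k div q = a" by auto
    then have "q > 0" by (auto intro: gr0I)
    with k have "k = a * q + k mod q" "k mod q < q"
      by (auto simp: div_mult_mod_eq)
    then show "k \<in> (\<lambda>y. a * q + y) ` {..<q}" by blast
  qed (auto simp: assms block_index_less)
  then show ?thesis
    by (simp add: sum.inter_filter[symmetric] sum.reindex)
qed

lemma mat_block_add:
  assumes "A \<in> carrier_mat (n * p) (m * q)" "B \<in> carrier_mat (n * p) (m * q)" "a < n" "c < m"
  shows "mat_block p q a c (A + B) = mat_block p q a c A + mat_block p q a c B"
  using assms by (intro eq_matI) (auto simp: block_index_less)

lemma mat_block_smult:
  assumes "A \<in> carrier_mat (n * p) (m * q)" "a < n" "c < m"
  shows "mat_block p q a c (k \<cdot>\<^sub>m A) = k \<cdot>\<^sub>m mat_block p q a c A"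
  using assms by (intro eq_matI) (auto simp: block_index_less)

lemma adj_carrier_mat [simp]: "A \<in> carrier_mat p q \<Longrightarrow> adj A \<in> carrier_mat q p"
  by (simp add: adj_def)

lemma dim_adj [simp]: "dim_row (adj A) = dim_col A" "dim_col (adj A) = dim_row A"
  by (simp_all add: adj_def)

lemma index_adj [simp]: "i < dim_col A \<Longrightarrow> j < dim_row A \<Longrightarrow> adj A $$ (i, j) = cnj (A $$ (j, i))"
  by (simp add: adj_def)

lemma adj_one [simp]: "adj (1\<^sub>m n) = 1\<^sub>m n"
  by (rule eq_matI) auto

lemma adj_mult:
  assumes "A \<in> carrier_mat p q" "B \<in> carrier_mat q r"
  shows "adj (A * B) = adj B * adj A"
  using assms by (intro eq_matI) (auto simp: scalar_prod_def cnj_sum mult.commute)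

lemma dim_kron [simp]:
  "dim_row (kron A B) = dim_row A * dim_row B" "dim_col (kron A B) = dim_col A * dim_col B"
  by (simp_all add: kron_def)

lemma kron_carrier_mat [simp]:
  "A \<in> carrier_mat n m \<Longrightarrow> B \<in> carrier_mat p q \<Longrightarrow> kron A B \<in> carrier_mat (n * p) (m * q)"
  unfolding carrier_mat_def kron_def by simp

lemma mat_block_kron:
  assumes "B \<in> carrier_mat p q" "a < dim_row A" "c < dim_col A"
  shows "mat_block p q a c (kron A B) = A $$ (a, c) \<cdot>\<^sub>m B"
  using assms by (intro eq_matI) (simp_all add: kron_def block_index_less)

lemma lift_carrier_mat [simp]: "V \<in> carrier_mat p q \<Longrightarrow> lift n V \<in> carrier_mat (n * p) (n * q)"
  by (simp add: lift_def)

lemma dim_lift [simp]: "dim_row (lift n V) = n * dim_row V" "dim_col (lift n V) = n * dim_col V"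
  by (simp_all add: lift_def)

lemma index_lift_block:
  assumes "V \<in> carrier_mat p q" "a < n" "s < p" "k < n * q"
  shows "lift n V $$ (a * p + s, k) = (if k div q = a then V $$ (s, k mod q) else 0)"
proof -
  have dims: "dim_row V = p" "dim_col V = q" using assms(1) by auto
  have "a * p + s < n * p" using assms(2,3) by (rule block_index_less)
  then have "lift n V $$ (a * p + s, k) = 1\<^sub>m n $$ (a, k div q) * V $$ (s, k mod q)"
    using assms(3,4) dims by (simp add: lift_def kron_def)
  moreover have "k div q < n" using assms(4) by (simp add: less_mult_imp_div_less)
  ultimately show ?thesis using assms(2) by auto
qed

lemma mat_block_lift_mult:
  assumes V: "V \<in> carrier_mat p q" and M: "M \<in> carrier_mat (n * q) (m * r)"
    and a: "a < n" and c: "c < m"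
  shows "mat_block p r a c (lift n V * M) = V * mat_block q r a c M"
proof (rule eq_matI)
  fix s t assume "s < dim_row (V * mat_block q r a c M)" "t < dim_col (V * mat_block q r a c M)"
  then have s: "s < p" and t: "t < r" using V by auto
  have dims: "dim_row V = p" "dim_col V = q" using V by auto
  have "(lift n V * M) $$ (a * p + s, c * r + t)
    = (\<Sum>k<n * q. lift n V $$ (a * p + s, k) * M $$ (k, c * r + t))"
    using dims M s t a c by (simp add: block_index_less scalar_prod_def lessThan_atLeast0)
  also have "\<dots>
    = (\<Sum>k<n * q. if k div q = a then V $$ (s, k mod q) * M $$ (k, c * r + t) else 0)"
    using V a s by (intro sum.cong) (auto simp: index_lift_block)
  also have "\<dots> = (\<Sum>y<q. V $$ (s, y) * M $$ (a * q + y, c * r + t))"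
    using a by (simp add: sum_if_div_eq)
  also have "\<dots> = (V * mat_block q r a c M) $$ (s, t)"
    using V s t by (simp add: scalar_prod_def lessThan_atLeast0)
  finally show "mat_block p r a c (lift n V * M) $$ (s, t) = (V * mat_block q r a c M) $$ (s, t)"
    using s t by simp
qed (use V in auto)

lemma mat_block_mult_adj_lift:
  assumes W: "W \<in> carrier_mat r q" and M: "M \<in> carrier_mat (m * p) (n * q)"
    and a: "a < m" and c: "c < n"
  shows "mat_block p r a c (M * adj (lift n W)) = mat_block p q a c M * adj W"
proof (rule eq_matI)
  fix s t
  assume "s < dim_row (mat_block p q a c M * adj W)" "t < dim_col (mat_block p q a c M * adj W)"
  then have s: "s < p" and t: "t < r" using W by auto
  have dims: "dim_row W = r" "dim_col W = q" using W by auto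
  have "(M * adj (lift n W)) $$ (a * p + s, c * r + t)
    = (\<Sum>k<n * q. M $$ (a * p + s, k) * cnj (lift n W $$ (c * r + t, k)))"
    using dims M s t a c by (simp add: block_index_less scalar_prod_def lessThan_atLeast0)
  also have "\<dots>
    = (\<Sum>k<n * q. if k div q = c then M $$ (a * p + s, k) * cnj (W $$ (t, k mod q)) else 0)"
    using W c t by (intro sum.cong) (auto simp: index_lift_block)
  also have "\<dots> = (\<Sum>y<q. M $$ (a * p + s, c * q + y) * cnj (W $$ (t, y)))"
    using c by (simp add: sum_if_div_eq)
  also have "\<dots> = (mat_block p q a c M * adj W) $$ (s, t)"
    using W s t by (simp add: scalar_prod_def lessThan_atLeast0)
  finally show "mat_block p r a c (M * adj (lift n W)) $$ (s, t)
    = (mat_block p q a c M * adj W) $$ (s, t)"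
    using s t by simp
qed (use W in auto)

lemma mat_block_conj_op_lift:
  assumes V: "V \<in> carrier_mat p q" and \<rho>: "\<rho> \<in> carrier_mat (n * q) (n * q)"
    and a: "a < n" and c: "c < n"
  shows "mat_block p p a c (conj_op (lift n V) \<rho>) = conj_op V (mat_block q q a c \<rho>)"
proof -
  have "lift n V * \<rho> \<in> carrier_mat (n * p) (n * q)"
    using lift_carrier_mat[OF V] \<rho> by (rule mult_carrier_mat)
  then show ?thesis
    using V \<rho> a c by (simp add: conj_op_def mat_block_mult_adj_lift mat_block_lift_mult)
qed

lemma lift_one: "lift n (1\<^sub>m q) = 1\<^sub>m (n * q)"
proof (rule eq_matI)
  fix i j
  assume "i < dim_row (1\<^sub>m (n * q) :: complex mat)" "j < dim_col (1\<^sub>m (n * q) :: complex mat)"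
  then have i: "i < n * q" and j: "j < n * q" by auto
  have q: "q > 0" using i by (auto intro: gr0I)
  have "lift n (1\<^sub>m q) $$ (i, j) = 1\<^sub>m n $$ (i div q, j div q) * 1\<^sub>m q $$ (i mod q, j mod q)"
    using i j q by (simp add: lift_def kron_def)
  also have "\<dots> = (if i div q = j div q \<and> i mod q = j mod q then 1 else 0)"
    using i j q by (simp add: less_mult_imp_div_less)
  also have "\<dots> = 1\<^sub>m (n * q) $$ (i, j)"
    using i j by (metis div_mult_mod_eq index_one_mat)
  finally show "lift n (1\<^sub>m q) $$ (i, j) = 1\<^sub>m (n * q) $$ (i, j)" .
qed (simp_all add: lift_def)

lemma dim_conj_op [simp]: "dim_row (conj_op V X) = dim_row V" "dim_col (conj_op V X) = dim_row V"
  by (simp_all add: conj_op_def)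

lemma conj_op_carrier_mat [simp]: "V \<in> carrier_mat p q \<Longrightarrow> conj_op V X \<in> carrier_mat p p"
  unfolding carrier_mat_def conj_op_def by simp

lemma conj_op_one: "X \<in> carrier_mat n n \<Longrightarrow> conj_op (1\<^sub>m n) X = X"
  by (simp add: conj_op_def)

lemma conj_op_mult:
  assumes A: "A \<in> carrier_mat p q" and B: "B \<in> carrier_mat q r" and X: "X \<in> carrier_mat r r"
  shows "conj_op (A * B) X = conj_op A (conj_op B X)"
proof -
  have BX: "B * X \<in> carrier_mat q r" using B X by (rule mult_carrier_mat)
  have ABX: "A * (B * X) \<in> carrier_mat p r" using A BX by (rule mult_carrier_mat)
  have "conj_op (A * B) X = A * B * X * (adj B * adj A)"
    by (simp only: conj_op_def adj_mult[OF A B])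
  also have "\<dots> = A * (B * X) * (adj B * adj A)"
    by (simp only: assoc_mult_mat[OF A B X])
  also have "\<dots> = A * (B * X) * adj B * adj A"
    by (rule assoc_mult_mat[symmetric, OF ABX adj_carrier_mat[OF B] adj_carrier_mat[OF A]])
  also have "\<dots> = A * (B * X * adj B) * adj A"
    by (simp only: assoc_mult_mat[OF A BX adj_carrier_mat[OF B]])
  finally show ?thesis by (simp only: conj_op_def)
qed

lemma conj_op_add:
  assumes V: "V \<in> carrier_mat p q" and X: "X \<in> carrier_mat q q" and Y: "Y \<in> carrier_mat q q"
  shows "conj_op V (X + Y) = conj_op V X + conj_op V Y"
  by (simp only: conj_op_def mult_add_distrib_mat[OF V X Y]
      add_mult_distrib_mat[OF mult_carrier_mat[OF V X] mult_carrier_mat[OF V Y] adj_carrier_mat[OF V]])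

lemma conj_op_smult:
  assumes V: "V \<in> carrier_mat p q" and X: "X \<in> carrier_mat q q"
  shows "conj_op V (k \<cdot>\<^sub>m X) = k \<cdot>\<^sub>m conj_op V X"
  by (simp only: conj_op_def mult_smult_distrib[OF V X]
      mult_smult_assoc_mat[OF mult_carrier_mat[OF V X] adj_carrier_mat[OF V]])

lemma pauliZ_carrier_mat [simp]: "pauliZ \<in> carrier_mat 2 2"
  by (simp add: pauliZ_def)

lemma dim_pauliZ [simp]: "dim_row pauliZ = 2" "dim_col pauliZ = 2"
  by (simp_all add: pauliZ_def)

lemma proj_carrier_mat [simp]: "proj b \<in> carrier_mat 2 2"
  by (simp add: proj_def)

lemma index_conj_op_pauliZ:
  assumes "X \<in> carrier_mat 2 2" "i < 2" "j < 2"
  shows "conj_op pauliZ X $$ (i, j) = (if i = j then X $$ (i, j) else - X $$ (i, j))"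
proof -
  have dims: "dim_row X = 2" "dim_col X = 2" using assms(1) by auto
  from assms(2,3) show ?thesis
    unfolding less_2_cases_iff
    by (elim disjE) (simp_all add: conj_op_def pauliZ_def scalar_prod_def numeral_2_eq_2 dims)
qed

lemma conj_op_pauliZ_proj: "conj_op pauliZ (proj b) = proj b"
  by (rule eq_matI) (auto simp: index_conj_op_pauliZ proj_def)

lemma pauliZ_twirl:
  assumes "X \<in> carrier_mat 2 2"
  shows "1/2 \<cdot>\<^sub>m X + 1/2 \<cdot>\<^sub>m conj_op pauliZ X
    = X $$ (0, 0) \<cdot>\<^sub>m proj 0 + X $$ (1, 1) \<cdot>\<^sub>m proj 1"
  using assms by (intro eq_matI) (auto simp: index_conj_op_pauliZ proj_def less_2_cases_iff)

definition bra :: "nat \<Rightarrow> complex mat" where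
  "bra b = mat 1 2 (\<lambda>(i, j). if j = b then 1 else 0)"

lemma bra_carrier_mat [simp]: "bra b \<in> carrier_mat 1 2"
  by (simp add: bra_def)

lemma dim_bra [simp]: "dim_row (bra b) = 1" "dim_col (bra b) = 2"
  by (simp_all add: bra_def)

lemma adj_bra_mult_bra: "adj (bra b) * bra b = proj b"
  by (rule eq_matI) (auto simp: bra_def proj_def scalar_prod_def)

lemma index_conj_op_bra:
  assumes "X \<in> carrier_mat 2 2" "b < 2"
  shows "conj_op (bra b) X $$ (0, 0) = X $$ (b, b)"
proof -
  have dims: "dim_row X = 2" "dim_col X = 2" using assms(1) by auto
  from assms(2) show ?thesis
    unfolding less_2_cases_iff
    by (elim disjE) (simp_all add: conj_op_def bra_def scalar_prod_def numeral_2_eq_2 dims)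
qed

lemma proj_add_proj: "proj 0 + proj 1 = 1\<^sub>m 2"
  by (rule eq_matI) (auto simp: proj_def less_2_cases_iff)

definition basis_measurement_sim :: simulator where
  "basis_measurement_sim = \<lparr>sim_m = 1, sim_K = (\<lambda>b. [bra b]), sim_L = [1\<^sub>m 2]\<rparr>"

lemma valid_basis_measurement_sim: "valid_sim basis_measurement_sim"
  using bra_carrier_mat proj_add_proj unfolding One_nat_def
  by (simp add: valid_sim_def basis_measurement_sim_def msum_def adj_bra_mult_bra)

lemma msum_pair: "B \<in> carrier_mat d d \<Longrightarrow> msum d [A, B] = A + B"
  by (simp add: msum_def)

lemma measured_branch_carrier_mat:
  "U \<in> carrier_mat 2 2 \<Longrightarrow>
    kron (conj_op (lift n (bra b)) \<rho>) (RSPSN U b) \<in> carrier_mat (n * 2) (n * 2)"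
  using conj_op_carrier_mat[OF lift_carrier_mat[OF bra_carrier_mat]] conj_op_carrier_mat
  by (simp add: RSPSN_def)

lemma RSPSN_sim_basis_measurement:
  assumes "U \<in> carrier_mat 2 2"
  shows "RSPSN_sim basis_measurement_sim n U \<rho> =
    kron (conj_op (lift n (bra 0)) \<rho>) (RSPSN U 0) + kron (conj_op (lift n (bra 1)) \<rho>) (RSPSN U 1)"
  using measured_branch_carrier_mat[OF assms]
  by (simp add: RSPSN_sim_def basis_measurement_sim_def lift_one conj_op_one msum_pair)

lemma index_conj_op_lift_bra:
  assumes \<rho>: "\<rho> \<in> carrier_mat (n * 2) (n * 2)" and "a < n" "c < n" "b < 2"
  shows "conj_op (lift n (bra b)) \<rho> $$ (a, c) = \<rho> $$ (a * 2 + b, c * 2 + b)"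
proof -
  have "mat_block 1 1 a c (conj_op (lift n (bra b)) \<rho>) = conj_op (bra b) (mat_block 2 2 a c \<rho>)"
    using bra_carrier_mat \<rho> assms(2,3) by (rule mat_block_conj_op_lift)
  then have "mat_block 1 1 a c (conj_op (lift n (bra b)) \<rho>) $$ (0, 0)
    = conj_op (bra b) (mat_block 2 2 a c \<rho>) $$ (0, 0)"
    by (rule arg_cong)
  then show ?thesis
    using assms by (simp add: index_conj_op_bra)
qed

lemma RU_carrier_mat [simp]:
  "V \<in> carrier_mat 2 2 \<Longrightarrow> \<rho> \<in> carrier_mat (n * 2) (n * 2) \<Longrightarrow>
    RU n V \<rho> \<in> carrier_mat (n * 2) (n * 2)"
  unfolding RU_def by (rule conj_op_carrier_mat[OF lift_carrier_mat])

lemma P4_mixture: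
  assumes U: "U \<in> carrier_mat 2 2" and \<rho>: "\<rho> \<in> carrier_mat (n * 2) (n * 2)"
  shows "msum (n * 2) (map (\<lambda>d. (1/2 :: complex) \<cdot>\<^sub>m RU n (U * (pauliZ ^\<^sub>m d)) \<rho>) [0, 1])
    = 1/2 \<cdot>\<^sub>m RU n U \<rho> + 1/2 \<cdot>\<^sub>m RU n (U * pauliZ) \<rho>"
proof -
  have "dim_col U = 2" using U by auto
  moreover have "RU n (U * pauliZ) \<rho> \<in> carrier_mat (n * 2) (n * 2)"
    using mult_carrier_mat[OF U pauliZ_carrier_mat] \<rho> by (rule RU_carrier_mat)
  ultimately show ?thesis by (simp add: msum_pair)
qed

lemma P4_real_hon_eq_RSPSN_hon:
  assumes U: "U \<in> carrier_mat 2 2" and \<sigma>: "\<sigma> \<in> carrier_mat n n"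
  shows "P4_real_hon n U \<sigma> = RSPSN_hon n U \<sigma>"
proof -
  let ?\<rho> = "kron \<sigma> (proj 0)"
  have \<rho>: "?\<rho> \<in> carrier_mat (n * 2) (n * 2)" using \<sigma> proj_carrier_mat by (rule kron_carrier_mat)
  have UZ: "U * pauliZ \<in> carrier_mat 2 2" using U pauliZ_carrier_mat by (rule mult_carrier_mat)
  have dims: "dim_row \<sigma> = n" "dim_col \<sigma> = n" using \<sigma> by auto
  have block_RU: "mat_block 2 2 a c (RU n V ?\<rho>) = \<sigma> $$ (a, c) \<cdot>\<^sub>m conj_op V (proj 0)"
    if "V \<in> carrier_mat 2 2" "a < n" "c < n" for V a c
    using that \<rho> dims by (simp add: RU_def mat_block_conj_op_lift mat_block_kron conj_op_smult)
  have real: "P4_real_hon n U \<sigma> = 1/2 \<cdot>\<^sub>m RU n U ?\<rho> + 1/2 \<cdot>\<^sub>m RU n (U * pauliZ) ?\<rho>"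
    unfolding P4_real_hon_def using U \<rho> by (rule P4_mixture)
  show ?thesis
  proof (rule eq_mat_blockI[where n = n and m = n and p = 2 and q = 2])
    fix a c assume ac: "a < n" "c < n"
    have "mat_block 2 2 a c (P4_real_hon n U \<sigma>)
      = 1/2 \<cdot>\<^sub>m (\<sigma> $$ (a, c) \<cdot>\<^sub>m conj_op U (proj 0))
        + 1/2 \<cdot>\<^sub>m (\<sigma> $$ (a, c) \<cdot>\<^sub>m conj_op (U * pauliZ) (proj 0))"
      using ac U UZ \<rho>
      by (simp add: real mat_block_add[where n = n and m = n] mat_block_smult[where n = n and m = n]
          block_RU)
    also have "conj_op (U * pauliZ) (proj 0) = conj_op U (proj 0)"
      by (simp add: conj_op_mult[OF U pauliZ_carrier_mat proj_carrier_mat] conj_op_pauliZ_proj)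
    also have "1/2 \<cdot>\<^sub>m (\<sigma> $$ (a, c) \<cdot>\<^sub>m conj_op U (proj 0))
        + 1/2 \<cdot>\<^sub>m (\<sigma> $$ (a, c) \<cdot>\<^sub>m conj_op U (proj 0))
      = \<sigma> $$ (a, c) \<cdot>\<^sub>m conj_op U (proj 0)"
      using U by (intro eq_matI) auto
    also have "\<dots> = mat_block 2 2 a c (RSPSN_hon n U \<sigma>)"
      using ac U dims by (simp add: RSPSN_hon_def RSPSN_def mat_block_kron)
    finally show "mat_block 2 2 a c (P4_real_hon n U \<sigma>) = mat_block 2 2 a c (RSPSN_hon n U \<sigma>)" .
  qed (use U UZ \<rho> \<sigma> in \<open>simp_all add: real RSPSN_hon_def RSPSN_def\<close>)
qed

lemma P4_real_mal_eq_RSPSN_sim: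
  assumes U: "U \<in> carrier_mat 2 2" and \<rho>: "\<rho> \<in> carrier_mat (n * 2) (n * 2)"
  shows "P4_real_mal n U \<rho> = RSPSN_sim basis_measurement_sim n U \<rho>"
proof -
  have UZ: "U * pauliZ \<in> carrier_mat 2 2" using U pauliZ_carrier_mat by (rule mult_carrier_mat)
  note outcome = measured_branch_carrier_mat[OF U]
  have real: "P4_real_mal n U \<rho> = 1/2 \<cdot>\<^sub>m RU n U \<rho> + 1/2 \<cdot>\<^sub>m RU n (U * pauliZ) \<rho>"
    unfolding P4_real_mal_def using U \<rho> by (rule P4_mixture)
  show ?thesis
  proof (rule eq_mat_blockI[where n = n and m = n and p = 2 and q = 2])
    fix a c assume ac: "a < n" "c < n"
    define X where "X = mat_block 2 2 a c \<rho>"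
    have X: "X \<in> carrier_mat 2 2" by (simp add: X_def)
    have ZX: "conj_op pauliZ X \<in> carrier_mat 2 2" using pauliZ_carrier_mat by (rule conj_op_carrier_mat)
    have block_RU: "mat_block 2 2 a c (RU n V \<rho>) = conj_op V X" if "V \<in> carrier_mat 2 2" for V
      using that \<rho> ac by (simp add: RU_def mat_block_conj_op_lift X_def)
    have "mat_block 2 2 a c (P4_real_mal n U \<rho>)
      = 1/2 \<cdot>\<^sub>m conj_op U X + 1/2 \<cdot>\<^sub>m conj_op (U * pauliZ) X"
      using ac U UZ \<rho>
      by (simp add: real mat_block_add[where n = n and m = n] mat_block_smult[where n = n and m = n]
          block_RU)
    also have "\<dots> = conj_op U (1/2 \<cdot>\<^sub>m X + 1/2 \<cdot>\<^sub>m conj_op pauliZ X)"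
      using U X ZX by (simp add: conj_op_mult[OF U pauliZ_carrier_mat X] conj_op_add conj_op_smult)
    also have "\<dots> = conj_op U (X $$ (0, 0) \<cdot>\<^sub>m proj 0 + X $$ (1, 1) \<cdot>\<^sub>m proj 1)"
      using X by (simp add: pauliZ_twirl)
    also have "\<dots> = X $$ (0, 0) \<cdot>\<^sub>m conj_op U (proj 0) + X $$ (1, 1) \<cdot>\<^sub>m conj_op U (proj 1)"
      using U by (simp add: conj_op_add conj_op_smult)
    also have "\<dots> = mat_block 2 2 a c (RSPSN_sim basis_measurement_sim n U \<rho>)"
      using ac U \<rho> outcome
      by (simp add: RSPSN_sim_basis_measurement mat_block_add[where n = n and m = n]
          mat_block_kron index_conj_op_lift_bra X_def RSPSN_def)
    finally show "mat_block 2 2 a c (P4_real_mal n U \<rho>)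
      = mat_block 2 2 a c (RSPSN_sim basis_measurement_sim n U \<rho>)" .
  qed (use U UZ \<rho> outcome in \<open>simp_all add: real RSPSN_sim_basis_measurement\<close>)
qed

lemma prob_out1_cong:
  assumes "\<And>U \<rho> E. (U, \<rho>, E) \<in> set D \<Longrightarrow> R1 n U \<rho> = R2 n U \<rho>"
  shows "prob_out1 n D R1 = prob_out1 n D R2"
  unfolding prob_out1_def using assms by (intro arg_cong[where f = sum_list] map_cong) auto

lemma distinguisher_branch_carrier_mat:
  assumes "distinguisher n k D" "(U, \<rho>, E) \<in> set D"
  shows "U \<in> carrier_mat 2 2" "\<rho> \<in> carrier_mat k k"
  using assms by (auto simp: distinguisher_def unitary2_def psd_def)

theorem theorem7:
  shows "P4_constructs_RSPSN 0"
  unfolding P4_constructs_RSPSN_def indist_hon_def indist_mal_def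
proof (intro conjI exI allI impI)
  fix n D assume D: "distinguisher n n D"
  have "prob_out1 n D P4_real_hon = prob_out1 n D RSPSN_hon"
    by (intro prob_out1_cong P4_real_hon_eq_RSPSN_hon)
      (blast intro: distinguisher_branch_carrier_mat[OF D])+
  then show "\<bar>prob_out1 n D P4_real_hon - prob_out1 n D RSPSN_hon\<bar> \<le> 0" by simp
next
  show "valid_sim basis_measurement_sim" by (rule valid_basis_measurement_sim)
next
  fix n D assume D: "distinguisher n (n * 2) D"
  have "prob_out1 n D P4_real_mal = prob_out1 n D (RSPSN_sim basis_measurement_sim)"
    by (intro prob_out1_cong P4_real_mal_eq_RSPSN_sim)
      (blast intro: distinguisher_branch_carrier_mat[OF D])+
  then show "\<bar>prob_out1 n D P4_real_mal - prob_out1 n D (RSPSN_sim basis_measurement_sim)\<bar> \<le> 0"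
    by simp
qed

end
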